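(* For every $N\in\mathbb{N}$ there exists $L\in\mathbb{N}$ and an integer $n\geq N$ such that $\Delta_\ell(n)<0$ for all $\ell\geq L$.
   Context: For integers $n\geq 0$ let $S_n$ be the symmetric group on $n$ elements ($S_0$ trivial). For an integer $\ell\geq 1$ let $C_{\ell,n}=\{(\pi_1,\dots,\pi_\ell)\in S_n^\ell : \pi_j\pi_k=\pi_k\pi_j \text{ for all } 1\le j,k\le \ell\}$ and $N_\ell(n)=|C_{\ell,n}|/|S_n|$ (so $N_\ell(0)=1$). Define $\Delta_\ell(n)=N_\ell(n)^2-N_\ell(n-1)N_\ell(n+1)$ for $n\geq 1$. *)

theory Defs
  imports Complex_Main "HOL-Combinatorics.Permutations"
begin

definition Sym :: "nat \<Rightarrow> (nat \<Rightarrow> nat) set" where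
  "Sym n = {p. p permutes {..<n}}"

definition commuting_tuples :: "nat \<Rightarrow> nat \<Rightarrow> (nat \<Rightarrow> nat) list set" where
  "commuting_tuples l n = {ps. length ps = l \<and> set ps \<subseteq> Sym n \<and>
      (\<forall>j<l. \<forall>k<l. ps ! j \<circ> ps ! k = ps ! k \<circ> ps ! j)}"

definition Ncomm :: "nat \<Rightarrow> nat \<Rightarrow> real" where
  "Ncomm l n = real (card (commuting_tuples l n)) / real (card (Sym n))"

definition Delta :: "nat \<Rightarrow> nat \<Rightarrow> real" where
  "Delta l n = (Ncomm l n)^2 - Ncomm l (n - 1) * Ncomm l (n + 1)"

end

theory Submission
  imports Defs "HOL-Combinatorics.Cycles"
begin

(* Take n = 3N + 1. The entries of a commuting l-tuple in S_n form a commuting set, which lies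
   in an abelian permutation group G (its double centralizer). An element of G is determined by
   its values at one point of each orbit, so |G| is at most the product of the orbit sizes. These
   sizes sum to n, which is not divisible by 3, so one of them is not 3; with c^3 <= 3^c, and
   9 c^3 <= 8 3^c for c <> 3, this gives 9 |G|^3 <= 8 3^n. Counting tuples by the commuting set
   they span, |C(l,n)| <= T m^l with m^2 < 2 9^N. Conversely, block sums of commuting tuples and
   cyclic groups give |C(l,3N)| |C(l,3N+2)| >= (2 9^N)^l. Hence
   (n+1) |C(l,n)|^2 < n |C(l,n-1)| |C(l,n+1)| for all large l, which after cancelling the
   factorials is Delta_l(n) < 0. *)

section \<open>Elementary estimates\<close>

lemma nine_cube_le_eight_three_pow:
  fixes c :: nat
  assumes "c \<noteq> 3"
  shows "9 * c ^ 3 \<le> 8 * 3 ^ c"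
proof (cases "c \<ge> 4")
  case True
  then show ?thesis
  proof (induction c rule: dec_induct)
    case (step m)
    have "4 * m \<le> m * m" and "4 * (m * m) \<le> m * m * m"
      using mult_right_mono[OF step(1), of m] mult_right_mono[OF step(1), of "m * m"] by simp_all
    moreover have "(Suc m) ^ 3 = m * m * m + 3 * (m * m) + 3 * m + 1"
      by (simp add: power3_eq_cube algebra_simps)
    ultimately have "(Suc m) ^ 3 \<le> 2 * m ^ 3"
      using step(1) unfolding power3_eq_cube by linarith
    then show ?case using step(3) by simp
  qed simp
next
  case False
  with assms have "c \<in> {0, 1, 2}" by auto
  then show ?thesis by auto
qed

lemma cube_le_three_pow: "(c::nat) ^ 3 \<le> 3 ^ c"
  using nine_cube_le_eight_three_pow[of c] by (cases "c = 3") auto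

lemma nine_prod_cube_le_eight_three_pow_sum:
  fixes f :: "'a \<Rightarrow> nat"
  assumes "finite I" "i \<in> I" "f i \<noteq> 3"
  shows "9 * (\<Prod>j\<in>I. f j) ^ 3 \<le> 8 * 3 ^ (\<Sum>j\<in>I. f j)"
proof -
  have "9 * (\<Prod>j\<in>I. f j) ^ 3 = (9 * f i ^ 3) * (\<Prod>j\<in>I - {i}. f j ^ 3)"
    using assms by (simp add: prod.remove power_mult_distrib prod_power_distrib)
  also have "\<dots> \<le> (8 * 3 ^ f i) * (\<Prod>j\<in>I - {i}. 3 ^ f j)"
    using assms(3) by (intro mult_mono prod_mono nine_cube_le_eight_three_pow)
      (simp_all add: cube_le_three_pow)
  also have "\<dots> = 8 * 3 ^ (\<Sum>j\<in>I. f j)"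
    using assms by (simp add: power_sum prod.remove)
  finally show ?thesis .
qed

lemma cube_bound_imp_square_less:
  fixes m N :: nat
  assumes "9 * m ^ 3 \<le> 8 * 3 ^ (3 * N + 1)"
  shows "m ^ 2 < 2 * 9 ^ N"
proof -
  obtain y :: nat where y: "3 ^ (3 * N + 1) = 3 * y ^ 3" "9 ^ N = y ^ 2" "y > 0"
  proof
    show "(3::nat) ^ (3 * N + 1) = 3 * (3 ^ N) ^ 3"
      by (simp add: power_add mult.commute flip: power_mult)
    show "(9::nat) ^ N = (3 ^ N) ^ 2"
      by (induction N) (simp_all add: power_mult_distrib)
  qed simp
  have "(m ^ 2) ^ 3 * 81 = (9 * m ^ 3) ^ 2"
    by (simp add: power_mult_distrib flip: power_mult)
  also have "\<dots> \<le> (24 * y ^ 3) ^ 2"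
    using power_mono[OF assms, of 2] y(1) by simp
  also have "\<dots> < (2 * y ^ 2) ^ 3 * 81"
    using y(3) by (simp add: power_mult_distrib flip: power_mult)
  finally have "(m ^ 2) ^ 3 < (2 * y ^ 2) ^ 3"
    by (rule mult_less_cancel2[THEN iffD1, THEN conjunct2])
  then have "m ^ 2 < 2 * y ^ 2"
    by (rule power_less_imp_less_base) simp
  then show ?thesis
    using y(2) by simp
qed

lemma eventually_mult_pow_less:
  fixes C q p :: nat
  assumes "q < p"
  shows "eventually (\<lambda>l. C * q ^ l < p ^ l) sequentially"
proof -
  have "(\<lambda>l. real C * (real q / real p) ^ l) \<longlonglongrightarrow> 0"
    using assms by (intro tendsto_mult_right_zero LIMSEQ_power_zero) simp
  then have "eventually (\<lambda>l. real C * (real q / real p) ^ l < 1) sequentially"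
    by (rule order_tendstoD) simp
  then show ?thesis
    by eventually_elim
      (use assms in \<open>simp add: power_divide field_simps flip: of_nat_power of_nat_mult\<close>)
qed

section \<open>Commuting tuples and commuting sets\<close>

lemma finite_Sym: "finite (Sym n)"
  unfolding Sym_def by (rule finite_permutations) simp

lemma card_Sym: "card (Sym n) = fact n"
  unfolding Sym_def by (rule card_permutations) simp_all

lemma id_in_Sym: "id \<in> Sym n"
  by (simp add: Sym_def)

definition commuting :: "('a \<Rightarrow> 'a) set \<Rightarrow> bool" where
  "commuting A \<longleftrightarrow> (\<forall>f\<in>A. \<forall>g\<in>A. f \<circ> g = g \<circ> f)"

lemma commuting_tuples_altdef:
  "commuting_tuples l n = {ps. set ps \<subseteq> Sym n \<and> length ps = l \<and> commuting (set ps)}"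
  unfolding commuting_tuples_def commuting_def by (auto simp: all_set_conv_all_nth)

lemma finite_commuting_tuples: "finite (commuting_tuples l n)"
  unfolding commuting_tuples_altdef
  by (rule finite_subset[where B = "{ps. set ps \<subseteq> Sym n \<and> length ps = l}"])
    (auto intro: finite_lists_length_eq finite_Sym)

lemma commuting_tuples_nth_permutes:
  assumes "ps \<in> commuting_tuples l n" "j < l"
  shows "ps ! j permutes {..<n}"
proof -
  have "ps ! j \<in> set ps"
    using assms by (simp add: commuting_tuples_def)
  then show ?thesis
    using assms(1) by (auto simp: commuting_tuples_def Sym_def)
qed

lemma card_commuting_tuples_ge:
  assumes "A \<subseteq> Sym n" "commuting A"
  shows "card A ^ l \<le> card (commuting_tuples l n)"
proof -
  have "{ps. set ps \<subseteq> A \<and> length ps = l} \<subseteq> commuting_tuples l n"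
    using assms by (auto simp: commuting_tuples_altdef commuting_def)
  then have "card {ps. set ps \<subseteq> A \<and> length ps = l} \<le> card (commuting_tuples l n)"
    by (rule card_mono[OF finite_commuting_tuples])
  then show ?thesis
    using finite_subset[OF assms(1) finite_Sym] by (simp add: card_lists_length_eq)
qed

lemma card_commuting_tuples_le:
  assumes "\<And>A. A \<subseteq> Sym n \<Longrightarrow> commuting A \<Longrightarrow> card A \<le> m"
  shows "card (commuting_tuples l n) \<le> card {A. A \<subseteq> Sym n \<and> commuting A} * m ^ l"
proof -
  define AA where "AA = {A. A \<subseteq> Sym n \<and> commuting A}"
  have "finite AA"
    unfolding AA_def using finite_Sym by simp
  have fin: "finite A" if "A \<in> AA" for A
    using that finite_Sym finite_subset unfolding AA_def by blast
  have "commuting_tuples l n \<subseteq> (\<Union>A\<in>AA. {ps. set ps \<subseteq> A \<and> length ps = l})"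
    by (auto simp: commuting_tuples_altdef AA_def)
  then have "card (commuting_tuples l n) \<le> card (\<Union>A\<in>AA. {ps. set ps \<subseteq> A \<and> length ps = l})"
    using \<open>finite AA\<close> fin by (intro card_mono) (auto intro: finite_lists_length_eq)
  also have "\<dots> \<le> (\<Sum>A\<in>AA. card {ps. set ps \<subseteq> A \<and> length ps = l})"
    using \<open>finite AA\<close> by (rule card_UN_le)
  also have "\<dots> = (\<Sum>A\<in>AA. card A ^ l)"
    using fin by (simp add: card_lists_length_eq)
  also have "\<dots> \<le> (\<Sum>A\<in>AA. m ^ l)"
    using assms by (intro sum_mono power_mono) (auto simp: AA_def)
  finally show ?thesis
    by (simp add: AA_def)
qed

section \<open>Abelian permutation groups\<close>

definition centralizer :: "('a \<Rightarrow> 'a) set \<Rightarrow> ('a \<Rightarrow> 'a) set" where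
  "centralizer S = {g. \<forall>s\<in>S. g \<circ> s = s \<circ> g}"

lemma comp_in_centralizer:
  "g \<in> centralizer S \<Longrightarrow> h \<in> centralizer S \<Longrightarrow> g \<circ> h \<in> centralizer S"
  by (simp add: centralizer_def) (metis comp_assoc)

lemma inv_in_centralizer:
  assumes "bij g" "g \<in> centralizer S"
  shows "inv g \<in> centralizer S"
proof -
  have "inv g (s x) = s (inv g x)" if "s \<in> S" for s x
  proof -
    obtain y where y: "x = g y"
      using bij_is_surj[OF assms(1)] by (metis surj_f_inv_f)
    have "g (s y) = s x"
      using assms(2) that y by (simp add: centralizer_def fun_eq_iff)
    then show ?thesis
      using bij_is_inj[OF assms(1)] y by (metis inv_f_f)
  qed
  then show ?thesis
    by (simp add: centralizer_def fun_eq_iff)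
qed

locale abelian_perm_group =
  fixes G :: "(nat \<Rightarrow> nat) set" and n :: nat
  assumes subset_Sym: "G \<subseteq> Sym n"
    and id_mem: "id \<in> G"
    and comp_mem: "g \<in> G \<Longrightarrow> h \<in> G \<Longrightarrow> g \<circ> h \<in> G"
    and inv_mem: "g \<in> G \<Longrightarrow> inv g \<in> G"
    and commuting: "commuting G"
begin

lemma permutes: "g \<in> G \<Longrightarrow> g permutes {..<n}"
  using subset_Sym by (auto simp: Sym_def)

lemma finite_G: "finite G"
  using subset_Sym finite_Sym by (rule finite_subset)

lemma commute_apply:
  assumes "g \<in> G" "h \<in> G"
  shows "g (h x) = h (g x)"
proof -
  have "g \<circ> h = h \<circ> g"
    using commuting assms by (simp add: commuting_def)
  then show ?thesis
    by (metis comp_apply)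
qed

definition orbit :: "nat \<Rightarrow> nat set" where
  "orbit x = (\<lambda>g. g x) ` G"

lemma orbit_memI: "g \<in> G \<Longrightarrow> g x \<in> orbit x"
  by (simp add: orbit_def)

lemma mem_orbit_self: "x \<in> orbit x"
  using orbit_memI[OF id_mem] by simp

lemma orbit_eq:
  assumes "y \<in> orbit x"
  shows "orbit y = orbit x"
proof -
  obtain g where g: "g \<in> G" "y = g x"
    using assms by (auto simp: orbit_def)
  have "h y \<in> orbit x" if "h \<in> G" for h
    using orbit_memI[OF comp_mem[OF that g(1)]] g by simp
  moreover have "h x \<in> orbit y" if "h \<in> G" for h
  proof -
    have "h x = (h \<circ> inv g) y"
      using g permutes_inverses(2)[OF permutes] by simp
    then show ?thesis
      using orbit_memI[OF comp_mem[OF that inv_mem[OF g(1)]]] by simp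
  qed
  ultimately show ?thesis
    by (auto simp: orbit_def)
qed

lemma orbit_subset: "x < n \<Longrightarrow> orbit x \<subseteq> {..<n}"
  using permutes permutes_in_image by (fastforce simp: orbit_def)

lemma finite_orbit: "finite (orbit x)"
  using finite_G by (simp add: orbit_def)

definition orbits :: "nat set set" where
  "orbits = orbit ` {..<n}"

lemma sum_card_orbits: "(\<Sum>Q\<in>orbits. card Q) = n"
proof -
  have "pairwise disjnt orbits"
    unfolding orbits_def pairwise_def disjnt_def by (auto dest: orbit_eq)
  then have "card (\<Union>orbits) = (\<Sum>Q\<in>orbits. card Q)"
    by (rule card_Union_disjoint) (auto simp: orbits_def finite_orbit)
  moreover have "\<Union>orbits = {..<n}"
    using orbit_subset mem_orbit_self by (auto simp: orbits_def)
  ultimately show ?thesis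
    by simp
qed

text \<open>An element \<open>g \<in> G\<close> is determined by its values at the points \<open>Min Q\<close>: every point of
  an orbit \<open>Q\<close> is \<open>k (Min Q)\<close> for some \<open>k \<in> G\<close>, and \<open>g (k x) = k (g x)\<close>.\<close>

lemma card_le_prod_card_orbits: "card G \<le> (\<Prod>Q\<in>orbits. card Q)"
proof -
  have Min_orbit: "Min Q \<in> Q" "orbit (Min Q) = Q" if Q: "Q \<in> orbits" for Q
  proof -
    obtain x where "Q = orbit x"
      using Q unfolding orbits_def by blast
    then show "Min Q \<in> Q"
      using Min_in[OF finite_orbit] mem_orbit_self by blast
    then show "orbit (Min Q) = Q"
      using Q orbit_eq by (auto simp: orbits_def)
  qed
  define F :: "(nat \<Rightarrow> nat) \<Rightarrow> nat set \<Rightarrow> nat"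
    where "F g = (\<lambda>Q\<in>orbits. g (Min Q))" for g
  have "F ` G \<subseteq> PiE orbits (\<lambda>Q. Q)"
    using Min_orbit orbit_memI by (force simp: F_def)
  moreover have "inj_on F G"
  proof (rule inj_onI, rule ext)
    fix g h x assume g: "g \<in> G" and h: "h \<in> G" and eq: "F g = F h"
    show "g x = h x"
    proof (cases "x < n")
      case True
      define r where "r = Min (orbit x)"
      have Q: "orbit x \<in> orbits"
        using True by (simp add: orbits_def)
      then have "g r = h r"
        using fun_cong[OF eq, of "orbit x"] by (simp add: F_def r_def)
      obtain k where k: "k \<in> G" "x = k r"
        using Min_orbit(2)[OF Q] mem_orbit_self[of x] by (auto simp: orbit_def r_def)
      have "g x = k (g r)" "h x = k (h r)"
        using g h k by (simp_all add: commute_apply)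
      with \<open>g r = h r\<close> show ?thesis
        by simp
    next
      case False
      then show ?thesis
        using permutes_not_in[OF permutes[OF g]] permutes_not_in[OF permutes[OF h]] by simp
    qed
  qed
  moreover have "finite (PiE orbits (\<lambda>Q. Q))"
    by (rule finite_PiE) (auto simp: orbits_def finite_orbit)
  ultimately have "card G \<le> card (PiE orbits (\<lambda>Q. Q))"
    by (simp add: card_inj_on_le)
  then show ?thesis
    by (simp add: card_PiE orbits_def)
qed

lemma nine_card_cube_le_eight_three_pow:
  assumes "\<not> 3 dvd n"
  shows "9 * card G ^ 3 \<le> 8 * 3 ^ n"
proof -
  have "\<exists>Q\<in>orbits. card Q \<noteq> 3"
  proof (rule ccontr)
    assume "\<not> (\<exists>Q\<in>orbits. card Q \<noteq> 3)"
    then have "n = 3 * card orbits"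
      using sum_card_orbits by simp
    with assms show False
      by (metis dvd_triv_left)
  qed
  then obtain Q where "Q \<in> orbits" "card Q \<noteq> 3" ..
  then have "9 * (\<Prod>Q\<in>orbits. card Q) ^ 3 \<le> 8 * 3 ^ n"
    using nine_prod_cube_le_eight_three_pow_sum[of orbits Q card] sum_card_orbits
    by (simp add: orbits_def)
  moreover have "9 * card G ^ 3 \<le> 9 * (\<Prod>Q\<in>orbits. card Q) ^ 3"
    using card_le_prod_card_orbits by (simp add: power_mono)
  ultimately show ?thesis
    by (rule le_trans[rotated])
qed

end

text \<open>The double centralizer of a commuting set \<open>A\<close> is abelian: it is contained in the
  centralizer of \<open>A\<close>, which it centralizes.\<close>

lemma commuting_subset_abelian_perm_group:
  assumes "A \<subseteq> Sym n" "commuting A"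
  defines "G \<equiv> Sym n \<inter> centralizer (Sym n \<inter> centralizer A)"
  shows "A \<subseteq> G" "abelian_perm_group G n"
proof -
  have A_centralizer: "A \<subseteq> Sym n \<inter> centralizer A"
    using assms(1,2) by (auto simp: commuting_def centralizer_def)
  then have G_centralizer: "G \<subseteq> Sym n \<inter> centralizer A"
    by (auto simp: G_def centralizer_def)
  show "A \<subseteq> G"
    using assms(1) by (auto simp: G_def centralizer_def)
  show "abelian_perm_group G n"
  proof
    show "G \<subseteq> Sym n" "id \<in> G"
      by (auto simp: G_def id_in_Sym centralizer_def)
    show "g \<circ> h \<in> G" if "g \<in> G" "h \<in> G" for g h
      using that by (auto simp: G_def Sym_def permutes_compose intro: comp_in_centralizer)
    show "inv g \<in> G" if "g \<in> G" for g
      using that by (auto simp: G_def Sym_def permutes_inv permutes_bij intro: inv_in_centralizer)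
    show "commuting G"
      unfolding commuting_def
    proof (intro ballI)
      fix f g assume "f \<in> G" "g \<in> G"
      then show "f \<circ> g = g \<circ> f"
        using G_centralizer by (auto simp: G_def centralizer_def)
    qed
  qed
qed

lemma nine_card_commuting_cube_le:
  assumes "A \<subseteq> Sym n" "commuting A" "\<not> 3 dvd n"
  shows "9 * card A ^ 3 \<le> 8 * 3 ^ n"
proof -
  define G where "G = Sym n \<inter> centralizer (Sym n \<inter> centralizer A)"
  interpret abelian_perm_group G n
    unfolding G_def using assms(1,2) by (rule commuting_subset_abelian_perm_group)
  have "card A \<le> card G"
    using commuting_subset_abelian_perm_group(1)[OF assms(1,2)] finite_G
    by (simp add: G_def card_mono)
  then have "9 * card A ^ 3 \<le> 9 * card G ^ 3"
    by (simp add: power_mono)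
  also have "\<dots> \<le> 8 * 3 ^ n"
    using assms(3) by (rule nine_card_cube_le_eight_three_pow)
  finally show ?thesis .
qed

lemma commuting_tuples_growth_bound:
  assumes "\<not> 3 dvd n"
  obtains m T where "9 * m ^ 3 \<le> 8 * 3 ^ n" "\<And>l. card (commuting_tuples l n) \<le> T * m ^ l"
proof -
  obtain A where A: "A \<subseteq> Sym n" "commuting A"
    and A_max: "\<And>B. B \<subseteq> Sym n \<Longrightarrow> commuting B \<Longrightarrow> card B \<le> card A"
    using ex_has_greatest_nat[of "\<lambda>A. A \<subseteq> Sym n \<and> commuting A" "{}" card "Suc (card (Sym n))"]
    by (auto simp: commuting_def le_imp_less_Suc card_mono finite_Sym)
  show thesis
    using that[OF nine_card_commuting_cube_le[OF A assms] card_commuting_tuples_le[OF A_max]] .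
qed

section \<open>Lower bounds from block sums\<close>

definition block_sum :: "nat \<Rightarrow> (nat \<Rightarrow> nat) \<Rightarrow> (nat \<Rightarrow> nat) \<Rightarrow> nat \<Rightarrow> nat" where
  "block_sum a p q x = (if x < a then p x else a + q (x - a))"

lemma block_sum_id: "block_sum a id id = id"
  by (rule ext) (simp add: block_sum_def)

lemma block_sum_comp:
  assumes "p' permutes {..<a}"
  shows "block_sum a p q \<circ> block_sum a p' q' = block_sum a (p \<circ> p') (q \<circ> q')"
proof
  fix x
  show "(block_sum a p q \<circ> block_sum a p' q') x = block_sum a (p \<circ> p') (q \<circ> q') x"
  proof (cases "x < a")
    case True
    then have "p' x < a"
      using permutes_in_image[OF assms, of x] by simp
    with True show ?thesis
      by (simp add: block_sum_def)
  qed (simp add: block_sum_def)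
qed

lemma block_sum_permutes:
  assumes p: "p permutes {..<a}" and q: "q permutes {..<b}"
  shows "block_sum a p q permutes {..<a + b}"
proof -
  let ?g = "block_sum a (inv p) (inv q)"
  have "?g \<circ> block_sum a p q = id" "block_sum a p q \<circ> ?g = id"
    using p q by (simp_all add: block_sum_comp permutes_inv permutes_inv_o block_sum_id)
  then have "bij (block_sum a p q)"
    by (rule o_bij)
  moreover have "block_sum a p q x = x" if "x \<notin> {..<a + b}" for x
    using that permutes_not_in[OF q, of "x - a"] by (simp add: block_sum_def)
  ultimately show ?thesis
    by (simp add: bij_iff permutes_def)
qed

lemma block_sum_inject:
  assumes p: "p permutes {..<a}" and p': "p' permutes {..<a}"
    and eq: "block_sum a p q = block_sum a p' q'"
  shows "p = p'" "q = q'"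
proof -
  show "p = p'"
  proof
    fix x
    show "p x = p' x"
      using fun_cong[OF eq, of x] permutes_not_in[OF p, of x] permutes_not_in[OF p', of x]
      by (cases "x < a") (simp_all add: block_sum_def)
  qed
  show "q = q'"
  proof
    fix y
    show "q y = q' y"
      using fun_cong[OF eq, of "a + y"] by (simp add: block_sum_def)
  qed
qed

lemma card_commuting_tuples_add_ge:
  "card (commuting_tuples l a) * card (commuting_tuples l b) \<le> card (commuting_tuples l (a + b))"
proof -
  define F where "F = (\<lambda>(ps, qs). map2 (block_sum a) ps qs)"
  let ?C = "commuting_tuples l a \<times> commuting_tuples l b"
  have F_nth: "F (ps, qs) ! j = block_sum a (ps ! j) (qs ! j)"
    if "(ps, qs) \<in> ?C" "j < l" for ps qs j
    using that by (simp add: F_def commuting_tuples_def)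
  have F_length: "length (F (ps, qs)) = l" if "(ps, qs) \<in> ?C" for ps qs
    using that by (simp add: F_def commuting_tuples_def)
  have "F ` ?C \<subseteq> commuting_tuples l (a + b)"
  proof clarify
    fix ps qs assume pq: "ps \<in> commuting_tuples l a" "qs \<in> commuting_tuples l b"
    then have perm: "ps ! j permutes {..<a}" "qs ! j permutes {..<b}" if "j < l" for j
      using that by (simp_all add: commuting_tuples_nth_permutes)
    have "F (ps, qs) ! j \<in> Sym (a + b)" if "j < l" for j
      using pq that perm by (simp add: F_nth Sym_def block_sum_permutes)
    moreover have "F (ps, qs) ! j \<circ> F (ps, qs) ! k = F (ps, qs) ! k \<circ> F (ps, qs) ! j"
      if "j < l" "k < l" for j k
      using pq that perm by (simp add: F_nth block_sum_comp commuting_tuples_def)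
    ultimately show "F (ps, qs) \<in> commuting_tuples l (a + b)"
      using pq F_length by (auto simp: commuting_tuples_def in_set_conv_nth)
  qed
  moreover have "inj_on F ?C"
  proof (rule inj_onI)
    fix x y assume x: "x \<in> ?C" and y: "y \<in> ?C" and eq: "F x = F y"
    obtain ps qs ps' qs' where xy: "x = (ps, qs)" "y = (ps', qs')"
      by fastforce
    have "ps ! j = ps' ! j \<and> qs ! j = qs' ! j" if "j < l" for j
    proof -
      have "block_sum a (ps ! j) (qs ! j) = block_sum a (ps' ! j) (qs' ! j)"
        using eq F_nth[OF x[unfolded xy] that] F_nth[OF y[unfolded xy] that] by (simp add: xy)
      moreover have "ps ! j permutes {..<a}" "ps' ! j permutes {..<a}"
        using x y commuting_tuples_nth_permutes[OF _ that] by (simp_all add: xy)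
      ultimately show ?thesis
        using block_sum_inject by blast
    qed
    then show "x = y"
      using x y by (auto simp: xy commuting_tuples_def intro: nth_equalityI)
  qed
  ultimately show ?thesis
    using card_inj_on_le[of F ?C] finite_commuting_tuples by (simp add: card_cartesian_product)
qed

lemma card_commuting_tuples_ge_one: "1 \<le> card (commuting_tuples l n)"
  using card_commuting_tuples_ge[of "{id}" n l] by (simp add: id_in_Sym commuting_def)

lemma card_commuting_tuples_ge_pow: "m ^ l \<le> card (commuting_tuples l m)"
proof -
  define c where "c = cycle_of_list [0..<m]"
  have c: "c permutes {..<m}"
    using cycle_permutes[of "[0..<m]"] by (simp add: c_def atLeast0LessThan)
  have c_pow_0: "(c ^^ i) 0 = i" if "i < m" for i
    using arg_cong[OF cyclic_rotation[of "[0..<m]" i], of "\<lambda>xs. xs ! 0"] that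
    by (simp add: c_def nth_rotate)
  define A where "A = (\<lambda>i. c ^^ i) ` {..<m}"
  have "A \<subseteq> Sym m"
    using c by (auto simp: A_def Sym_def permutes_funpow)
  moreover have "commuting A"
    by (auto simp: A_def commuting_def simp flip: funpow_add) (simp add: add.commute)
  moreover have "card A = m"
    unfolding A_def by (subst card_image) (auto intro!: inj_onI dest: fun_cong[of _ _ 0] simp: c_pow_0)
  ultimately show ?thesis
    using card_commuting_tuples_ge by metis
qed

lemma card_commuting_tuples_mult_ge: "(m ^ k) ^ l \<le> card (commuting_tuples l (m * k))"
proof (induction k)
  case 0
  then show ?case
    using card_commuting_tuples_ge_one by simp
next
  case (Suc k)
  have "(m ^ Suc k) ^ l = (m ^ k) ^ l * m ^ l"
    by (simp add: power_mult_distrib)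
  also have "\<dots> \<le> card (commuting_tuples l (m * k)) * card (commuting_tuples l m)"
    using Suc.IH card_commuting_tuples_ge_pow by (rule mult_le_mono)
  also have "\<dots> \<le> card (commuting_tuples l (m * Suc k))"
    using card_commuting_tuples_add_ge[of l "m * k" m] by (simp add: add.commute)
  finally show ?case .
qed

lemma card_commuting_tuples_neighbours_ge:
  "(2 * 9 ^ k) ^ l \<le> card (commuting_tuples l (3 * k)) * card (commuting_tuples l (3 * k + 2))"
proof -
  have "(9::nat) ^ k = 3 ^ k * 3 ^ k"
    by (simp flip: power_mult_distrib)
  then have "(2 * 9 ^ k) ^ l = (3 ^ k) ^ l * ((3 ^ k) ^ l * (2::nat) ^ l)"
    by (simp add: power_mult_distrib)
  also have "\<dots> \<le> card (commuting_tuples l (3 * k))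
      * (card (commuting_tuples l (3 * k)) * card (commuting_tuples l 2))"
    using card_commuting_tuples_mult_ge card_commuting_tuples_ge_pow by (intro mult_le_mono)
  also have "\<dots> \<le> card (commuting_tuples l (3 * k)) * card (commuting_tuples l (3 * k + 2))"
    using card_commuting_tuples_add_ge by (rule mult_le_mono2)
  finally show ?thesis .
qed

section \<open>The sign of \<open>Delta\<close>\<close>

lemma Delta_neg_iff:
  fixes l n :: nat
  assumes "n \<ge> 1"
  defines "c k \<equiv> card (commuting_tuples l k)"
  shows "Delta l n < 0 \<longleftrightarrow> (n + 1) * c n ^ 2 < n * (c (n - 1) * c (n + 1))"
proof -
  define F :: real where "F = fact (n - 1)"
  have "real n > 0" "real n + 1 > 0" "F > 0"
    using assms(1) by (simp_all add: F_def)
  have fact_n: "fact n = real n * F" and fact_Suc_n: "fact (n + 1) = (real n + 1) * (real n * F)"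
    using assms(1) by (simp_all add: F_def fact_reduce algebra_simps)
  have "Delta l n = (real ((n + 1) * c n ^ 2) - real (n * (c (n - 1) * c (n + 1))))
      / ((real n + 1) * real n ^ 2 * F ^ 2)"
    unfolding Delta_def Ncomm_def card_Sym c_def of_nat_fact fact_n fact_Suc_n F_def[symmetric]
    using \<open>real n > 0\<close> \<open>real n + 1 > 0\<close> \<open>F > 0\<close>
    by (simp add: divide_simps power2_eq_square) (simp add: algebra_simps)
  also have "\<dots> < 0 \<longleftrightarrow> real ((n + 1) * c n ^ 2) < real (n * (c (n - 1) * c (n + 1)))"
    using \<open>real n > 0\<close> \<open>F > 0\<close> by (simp add: pos_divide_less_eq)
  finally show ?thesis
    by (simp only: of_nat_less_iff)
qed

theorem corollary1p5:
  shows "\<forall>N::nat. \<exists>L::nat. \<exists>n::nat. n \<ge> N \<and> n \<ge> 1 \<and>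
           (\<forall>l::nat. l \<ge> 1 \<longrightarrow> l \<ge> L \<longrightarrow> Delta l n < 0)"
proof
  fix N :: nat
  define n where "n = 3 * N + 1"
  have "\<not> 3 dvd n"
    unfolding n_def by presburger
  then obtain m T where m_bound: "9 * m ^ 3 \<le> 8 * 3 ^ n"
    and growth: "\<And>l. card (commuting_tuples l n) \<le> T * m ^ l"
    using commuting_tuples_growth_bound by blast
  have "m ^ 2 < 2 * 9 ^ N"
    using m_bound unfolding n_def by (rule cube_bound_imp_square_less)
  then obtain L where L: "\<And>l. l \<ge> L \<Longrightarrow> (n + 1) * T ^ 2 * (m ^ 2) ^ l < (2 * 9 ^ N) ^ l"
    using eventually_mult_pow_less unfolding eventually_sequentially by blast
  have "Delta l n < 0" if "l \<ge> L" for l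
  proof -
    have "card (commuting_tuples l n) ^ 2 \<le> (T * m ^ l) ^ 2"
      using growth by (rule power_mono) simp
    also have "\<dots> = T ^ 2 * (m ^ 2) ^ l"
      by (simp add: power_mult_distrib flip: power_mult) (simp add: mult.commute)
    finally have "(n + 1) * card (commuting_tuples l n) ^ 2 \<le> (n + 1) * T ^ 2 * (m ^ 2) ^ l"
      unfolding mult.assoc by (rule mult_le_mono2)
    also have "\<dots> < (2 * 9 ^ N) ^ l"
      using L[OF that] .
    also have "\<dots> \<le> n * (card (commuting_tuples l (n - 1)) * card (commuting_tuples l (n + 1)))"
      using card_commuting_tuples_neighbours_ge[of N l] by (simp add: n_def)
    finally show ?thesis
      by (simp add: Delta_neg_iff n_def)
  qed
  then show "\<exists>L n. n \<ge> N \<and> n \<ge> 1 \<and> (\<forall>l. l \<ge> 1 \<longrightarrow> l \<ge> L \<longrightarrow> Delta l n < 0)"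
    by (intro exI[of _ L] exI[of _ n]) (simp add: n_def)
qed

end
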